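(* Let $(\Gamma,c)$ be a real Fuchsian group and $\gamma\in\Gamma$ an admissible element. Then the elliptic points of even order lying on $C_\gamma$ correspond bijectively to the elements of order two of $Z_\gamma$, where the point $z$ corresponds to $\sigma$ if $\sigma$ stabilizes $z$.
   Context: $\mathfrak{h}$ is the upper half-plane. A complex conjugation is an anti-holomorphic involution $c$ of $\mathfrak{h}$; for $\gamma\in\mathrm{PSL}_2(\mathbf{R})$, $\gamma^c=c\gamma c$. A real Fuchsian group is a pair $(\Gamma,c)$ with $\Gamma\subseteq\mathrm{PSL}_2(\mathbf{R})$ discrete, $c$ a complex conjugation, $\Gamma^c=\Gamma$, and $\mathfrak{h}^*/\Gamma$ compact, where $\mathfrak{h}^*$ is $\mathfrak{h}$ with the cusps of $\Gamma$ adjoined. $\gamma$ is admissible if $\gamma^c=\gamma^{-1}$; $C_\gamma=\{z\in\mathfrak{h}^*:\gamma z=cz\}$; $Z_\gamma=\{\sigma\in\Gamma:\sigma^c\gamma\sigma^{-1}=\gamma\}$. An elliptic point of even order is a point of $\mathfrak{h}$ whose stabilizer in $\Gamma$ is (finite cyclic) of even order. *)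

theory Defs
  imports "HOL-Complex_Analysis.Complex_Analysis"
begin

definition uhp :: "complex set" where
  "uhp = {z. Im z > 0}"

type_synonym mat2 = "real \<times> real \<times> real \<times> real"  (* (a,b,c,d) = [[a,b],[c,d]] *)

definition sl2 :: "mat2 \<Rightarrow> bool" where
  "sl2 M = (case M of (a,b,c,d) \<Rightarrow> a*d - b*c = 1)"

text \<open>An element of PSL2(R) is represented by the Moebius map it induces on the
  upper half-plane (restricted to uhp, so that +M and -M give the same object).\<close>
definition mob :: "mat2 \<Rightarrow> complex \<Rightarrow> complex" where
  "mob M = (case M of (a,b,c,d) \<Rightarrow>
     restrict (\<lambda>z. (of_real a * z + of_real b) / (of_real c * z + of_real d)) uhp)"

definition PSL2R :: "(complex \<Rightarrow> complex) set" where
  "PSL2R = mob ` {M. sl2 M}"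

definition mid :: "complex \<Rightarrow> complex" where
  "mid = restrict id uhp"

definition mcomp :: "(complex \<Rightarrow> complex) \<Rightarrow> (complex \<Rightarrow> complex) \<Rightarrow> complex \<Rightarrow> complex" where
  "mcomp f g = restrict (f \<circ> g) uhp"

definition minv :: "(complex \<Rightarrow> complex) \<Rightarrow> complex \<Rightarrow> complex" where
  "minv f = restrict (inv_into uhp f) uhp"

text \<open>A representative matrix (well defined up to sign).\<close>
definition mat_of :: "(complex \<Rightarrow> complex) \<Rightarrow> mat2" where
  "mat_of f = (SOME M. sl2 M \<and> mob M = f)"

definition complex_conjugation :: "(complex \<Rightarrow> complex) \<Rightarrow> bool" where
  "complex_conjugation c \<longleftrightarrow>
     (\<forall>z\<in>uhp. c z \<in> uhp) \<and> (\<forall>z\<in>uhp. c (c z) = z) \<and>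
     ((\<lambda>z. cnj (c z)) holomorphic_on uhp)"

definition conj_by :: "(complex \<Rightarrow> complex) \<Rightarrow> (complex \<Rightarrow> complex) \<Rightarrow> complex \<Rightarrow> complex" where
  "conj_by c g = restrict (c \<circ> g \<circ> c) uhp"

definition discrete_subgroup :: "(complex \<Rightarrow> complex) set \<Rightarrow> bool" where
  "discrete_subgroup \<Gamma> \<longleftrightarrow>
     \<Gamma> \<subseteq> PSL2R \<and> mid \<in> \<Gamma> \<and> (\<forall>f\<in>\<Gamma>. \<forall>g\<in>\<Gamma>. mcomp f g \<in> \<Gamma>) \<and> (\<forall>f\<in>\<Gamma>. minv f \<in> \<Gamma>) \<and>
     (\<forall>M. sl2 M \<and> mob M \<in> \<Gamma> \<longrightarrow> M isolated_in {N. sl2 N \<and> mob N \<in> \<Gamma>})"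

datatype extpt = Fin complex | Infty

definition bact :: "mat2 \<Rightarrow> extpt \<Rightarrow> extpt" where
  "bact M p = (case M of (a,b,c,d) \<Rightarrow>
     (case p of
        Infty \<Rightarrow> (if c = 0 then Infty else Fin (of_real (a / c)))
      | Fin z \<Rightarrow> (if of_real c * z + of_real d = 0 then Infty
                  else Fin ((of_real a * z + of_real b) / (of_real c * z + of_real d)))))"

definition act :: "(complex \<Rightarrow> complex) \<Rightarrow> extpt \<Rightarrow> extpt" where
  "act f p = bact (mat_of f) p"

definition parabolic :: "(complex \<Rightarrow> complex) \<Rightarrow> bool" where
  "parabolic f \<longleftrightarrow> f \<in> PSL2R \<and> f \<noteq> mid \<and>
     (case mat_of f of (a,b,c,d) \<Rightarrow> \<bar>a + d\<bar> = 2)"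

definition cusps :: "(complex \<Rightarrow> complex) set \<Rightarrow> extpt set" where
  "cusps \<Gamma> = {p. (p = Infty \<or> (\<exists>x::real. p = Fin (of_real x))) \<and>
                   (\<exists>f\<in>\<Gamma>. parabolic f \<and> act f p = p)}"

definition hstar :: "(complex \<Rightarrow> complex) set \<Rightarrow> extpt set" where
  "hstar \<Gamma> = Fin ` uhp \<union> cusps \<Gamma>"

text \<open>Horodisc neighbourhood (without the cusp itself) of a boundary point.\<close>
definition horodisc :: "extpt \<Rightarrow> real \<Rightarrow> extpt set" where
  "horodisc p r = (case p of
      Infty \<Rightarrow> Fin ` {z. Im z > r}
    | Fin x \<Rightarrow> Fin ` ball (x + \<i> * of_real r) r)"

definition openstar :: "(complex \<Rightarrow> complex) set \<Rightarrow> extpt set \<Rightarrow> bool" where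
  "openstar \<Gamma> U \<longleftrightarrow> U \<subseteq> hstar \<Gamma> \<and> open (Fin -` U \<inter> uhp) \<and>
     (\<forall>s \<in> U \<inter> cusps \<Gamma>. \<exists>r>0. insert s (horodisc s r) \<subseteq> U)"

definition hstar_top :: "(complex \<Rightarrow> complex) set \<Rightarrow> extpt topology" where
  "hstar_top \<Gamma> = topology (openstar \<Gamma>)"

definition orbit :: "(complex \<Rightarrow> complex) set \<Rightarrow> extpt \<Rightarrow> extpt set" where
  "orbit \<Gamma> p = {act f p | f. f \<in> \<Gamma>}"

definition compact_quotient :: "(complex \<Rightarrow> complex) set \<Rightarrow> bool" where
  "compact_quotient \<Gamma> \<longleftrightarrow>
     (\<exists>Q. quotient_map (hstar_top \<Gamma>) Q (orbit \<Gamma>) \<and> compact_space Q)"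

definition real_fuchsian :: "(complex \<Rightarrow> complex) set \<Rightarrow> (complex \<Rightarrow> complex) \<Rightarrow> bool" where
  "real_fuchsian \<Gamma> c \<longleftrightarrow> discrete_subgroup \<Gamma> \<and> complex_conjugation c \<and>
     conj_by c ` \<Gamma> = \<Gamma> \<and> compact_quotient \<Gamma>"

definition admissible :: "(complex \<Rightarrow> complex) \<Rightarrow> (complex \<Rightarrow> complex) \<Rightarrow> bool" where
  "admissible c g \<longleftrightarrow> conj_by c g = minv g"

text \<open>Points of \<open>C_\<gamma>\<close> lying in the upper half-plane (cusps are never elliptic).\<close>
definition Cset :: "(complex \<Rightarrow> complex) \<Rightarrow> (complex \<Rightarrow> complex) \<Rightarrow> complex set" where
  "Cset c g = {z \<in> uhp. g z = c z}"

definition Zset :: "(complex \<Rightarrow> complex) set \<Rightarrow> (complex \<Rightarrow> complex) \<Rightarrow> (complex \<Rightarrow> complex)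
                     \<Rightarrow> (complex \<Rightarrow> complex) set" where
  "Zset \<Gamma> c g = {\<sigma> \<in> \<Gamma>. mcomp (mcomp (conj_by c \<sigma>) g) (minv \<sigma>) = g}"

definition stab :: "(complex \<Rightarrow> complex) set \<Rightarrow> complex \<Rightarrow> (complex \<Rightarrow> complex) set" where
  "stab \<Gamma> z = {\<sigma> \<in> \<Gamma>. \<sigma> z = z}"

definition elliptic_even :: "(complex \<Rightarrow> complex) set \<Rightarrow> complex \<Rightarrow> bool" where
  "elliptic_even \<Gamma> z \<longleftrightarrow> z \<in> uhp \<and> finite (stab \<Gamma> z) \<and> even (card (stab \<Gamma> z))"

definition order_two :: "(complex \<Rightarrow> complex) \<Rightarrow> bool" where
  "order_two \<sigma> \<longleftrightarrow> \<sigma> \<noteq> mid \<and> mcomp \<sigma> \<sigma> = mid"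

end

theory Submission
  imports Defs "HOL-Library.Z2" "HOL-Library.Disjoint_Sets"
begin

text \<open>
  An element of order two of \<open>PSL\<^sub>2(\<real>)\<close> has trace zero, hence exactly one fixed point in the
  upper half-plane, and two such elements with a common fixed point coincide.
  If \<open>\<sigma> \<in> Z\<^sub>\<gamma>\<close> has order two and fixes \<open>z\<close>, the relation \<open>\<sigma>\<^sup>c \<gamma> = \<gamma> \<sigma>\<close> shows that \<open>c (\<gamma> z)\<close> is
  fixed by \<open>\<sigma>\<close> as well, so \<open>\<gamma> z = c z\<close>; the stabiliser of \<open>z\<close> is finite by discreteness and
  of even order because left multiplication by \<open>\<sigma>\<close> is a fixed-point-free involution on it.
  Conversely, a finite stabiliser of even order contains an element of order two \<open>\<sigma>\<close>
  (pair every element with its inverse), and if \<open>\<gamma> z = c z\<close> then \<open>\<gamma>\<^sup>-\<^sup>1 \<sigma>\<^sup>c \<gamma>\<close> is another element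
  of order two fixing \<open>z\<close>, so it equals \<open>\<sigma>\<close>, which says \<open>\<sigma> \<in> Z\<^sub>\<gamma>\<close>.
\<close>

section \<open>Matrices and Moebius transformations\<close>

definition mat_mul :: "mat2 \<Rightarrow> mat2 \<Rightarrow> mat2" where
  "mat_mul M N = (case M of (a,b,c,d) \<Rightarrow> case N of (a',b',c',d') \<Rightarrow>
     (a*a'+b*c', a*b'+b*d', c*a'+d*c', c*b'+d*d'))"

definition mat_adj :: "mat2 \<Rightarrow> mat2" where
  "mat_adj M = (case M of (a,b,c,d) \<Rightarrow> (d,-b,-c,a))"

lemma sl2_mat_mul:
  assumes "sl2 M" "sl2 N"
  shows "sl2 (mat_mul M N)"
proof -
  obtain a b c d a' b' c' d' where M: "M = (a,b,c,d)" and N: "N = (a',b',c',d')"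
    by (cases M, cases N)
  have "(a*a'+b*c')*(c*b'+d*d') - (a*b'+b*d')*(c*a'+d*c') = (a*d-b*c)*(a'*d'-b'*c')"
    by (simp add: algebra_simps)
  with assms show ?thesis by (simp add: M N sl2_def mat_mul_def)
qed

lemma sl2_mat_adj: "sl2 M \<Longrightarrow> sl2 (mat_adj M)"
  by (cases M) (simp add: sl2_def mat_adj_def algebra_simps)

lemma mat_mul_adj: "sl2 M \<Longrightarrow> mat_mul M (mat_adj M) = (1,0,0,1)"
  by (cases M) (auto simp: sl2_def mat_mul_def mat_adj_def algebra_simps)

lemma mat_adj_mul: "sl2 M \<Longrightarrow> mat_mul (mat_adj M) M = (1,0,0,1)"
  by (cases M) (auto simp: sl2_def mat_mul_def mat_adj_def algebra_simps)

lemma mat_mul_assoc: "mat_mul M (mat_mul N P) = mat_mul (mat_mul M N) P"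
  by (cases M; cases N; cases P) (simp add: mat_mul_def algebra_simps)

lemma mat_mul_id_left: "mat_mul (1,0,0,1) M = M"
  by (cases M) (simp add: mat_mul_def)

lemma mat_mul_id_right: "mat_mul M (1,0,0,1) = M"
  by (cases M) (simp add: mat_mul_def)

lemma continuous_on_mat_adj_mul: "continuous_on S (\<lambda>(M,N). mat_mul (mat_adj M) N)"
  unfolding mat_mul_def mat_adj_def case_prod_beta by (intro continuous_intros)

lemma mob_denominator_nonzero:
  assumes "a*d - b*c = (1::real)" "z \<in> uhp"
  shows "of_real c * z + of_real d \<noteq> 0"
proof
  assume h: "of_real c * z + of_real d = 0"
  have "Im (of_real c * z + of_real d) = c * Im z" by simp
  with h assms(2) have "c = 0" by (simp add: uhp_def)
  with h assms(1) show False by simp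
qed

lemma mob_apply:
  "z \<in> uhp \<Longrightarrow> mob (a,b,c,d) z = (of_real a * z + of_real b) / (of_real c * z + of_real d)"
  by (simp add: mob_def)

lemma mob_outside_uhp: "z \<notin> uhp \<Longrightarrow> mob M z = undefined"
  by (cases M) (simp add: mob_def)

lemma mob_in_uhp:
  assumes "sl2 M" "z \<in> uhp"
  shows "mob M z \<in> uhp"
proof -
  obtain a b c d where M: "M = (a,b,c,d)" by (cases M)
  obtain x y where z: "z = Complex x y" by (cases z)
  have det: "a*d - b*c = 1" and y: "y > 0" using assms by (auto simp: M z sl2_def uhp_def)
  have "(c*x+d)^2 + (c*y)^2 \<noteq> 0"
    using mob_denominator_nonzero[OF det assms(2)] by (auto simp: z complex_eq_iff power2_eq_square)
  then have pos: "(c*x+d)^2 + (c*y)^2 > 0" by (simp add: order_less_le)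
  have "Im (mob M z) = (a*y*(c*x+d) - (a*x+b)*(c*y)) / ((c*x+d)^2 + (c*y)^2)"
    using assms(2) by (simp add: M z mob_apply Im_divide power2_eq_square)
  also have "a*y*(c*x+d) - (a*x+b)*(c*y) = y * (a*d - b*c)" by (simp add: algebra_simps)
  finally show ?thesis using det y pos by (simp add: uhp_def)
qed

lemma mob_mat_mul:
  assumes "sl2 M" "sl2 N"
  shows "mob (mat_mul M N) = mcomp (mob M) (mob N)"
proof
  fix z
  show "mob (mat_mul M N) z = mcomp (mob M) (mob N) z"
  proof (cases "z \<in> uhp")
    case False
    then show ?thesis by (simp add: mob_outside_uhp mcomp_def)
  next
    case True
    obtain a b c d a' b' c' d' where M: "M = (a,b,c,d)" and N: "N = (a',b',c',d')"
      by (cases M, cases N)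
    define P Q where "P = of_real a' * z + of_real b'" and "Q = of_real c' * z + of_real d'"
    have "Q \<noteq> 0" using mob_denominator_nonzero True assms(2) by (simp add: N Q_def sl2_def)
    have "mob (mat_mul M N) z = (of_real a * P + of_real b * Q) / (of_real c * P + of_real d * Q)"
      using True by (simp add: M N P_def Q_def mat_mul_def mob_apply algebra_simps)
    also have "\<dots> = (of_real a * (P / Q) + of_real b) / (of_real c * (P / Q) + of_real d)"
    proof -
      have "of_real a * (P / Q) + of_real b = (of_real a * P + of_real b * Q) / Q"
        "of_real c * (P / Q) + of_real d = (of_real c * P + of_real d * Q) / Q"
        using \<open>Q \<noteq> 0\<close> by (simp_all add: field_simps)
      with \<open>Q \<noteq> 0\<close> show ?thesis by simp
    qed
    also have "\<dots> = mcomp (mob M) (mob N) z"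
      using True mob_in_uhp[OF assms(2) True] by (simp add: M N P_def Q_def mob_apply mcomp_def)
    finally show ?thesis .
  qed
qed

lemma mob_id: "mob (1,0,0,1) = mid"
  by (simp add: mob_def mid_def id_def)

lemma mob_uminus: "mob (-a,-b,-c,-d) = mob (a,b,c,d)"
proof -
  have "(of_real (-a) * z + of_real (-b)) / (of_real (-c) * z + of_real (-d))
      = (of_real a * z + of_real b) / (of_real c * z + of_real d :: complex)" for z
    by (simp only: of_real_minus mult_minus_left minus_add_distrib[symmetric] minus_divide_divide)
  then show ?thesis by (simp only: mob_def prod.case)
qed

lemma mob_mat_adj_apply:
  assumes "sl2 M" "z \<in> uhp"
  shows "mob M (mob (mat_adj M) z) = z" "mob (mat_adj M) (mob M z) = z"
proof -
  have "mob (mat_mul M (mat_adj M)) z = z" "mob (mat_mul (mat_adj M) M) z = z"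
    using assms by (simp_all add: mat_mul_adj mat_adj_mul mob_id mid_def)
  then show "mob M (mob (mat_adj M) z) = z" "mob (mat_adj M) (mob M z) = z"
    using assms by (simp_all add: mob_mat_mul sl2_mat_adj mcomp_def)
qed

lemma mob_mat_adj: assumes "sl2 M" shows "mob (mat_adj M) = minv (mob M)"
proof
  fix z
  show "mob (mat_adj M) z = minv (mob M) z"
  proof (cases "z \<in> uhp")
    case False
    then show ?thesis by (simp add: mob_outside_uhp minv_def)
  next
    case True
    have "inj_on (mob M) uhp" by (metis inj_onI mob_mat_adj_apply(2)[OF assms])
    then have "inv_into uhp (mob M) z = mob (mat_adj M) z"
      by (rule inv_into_f_eq) (use True assms mob_in_uhp sl2_mat_adj mob_mat_adj_apply in auto)
    then show ?thesis using True by (simp add: minv_def)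
  qed
qed

section \<open>\<open>PSL\<^sub>2(\<real>)\<close> as a group of maps of the upper half-plane\<close>

lemma PSL2R_E: assumes "f \<in> PSL2R" obtains M where "sl2 M" "f = mob M"
  using assms by (auto simp: PSL2R_def)

lemma PSL2R_in_uhp: "f \<in> PSL2R \<Longrightarrow> z \<in> uhp \<Longrightarrow> f z \<in> uhp"
  by (elim PSL2R_E) (simp add: mob_in_uhp)

lemma PSL2R_outside_uhp: "f \<in> PSL2R \<Longrightarrow> z \<notin> uhp \<Longrightarrow> f z = undefined"
  by (elim PSL2R_E) (simp add: mob_outside_uhp)

lemma PSL2R_minv: "f \<in> PSL2R \<Longrightarrow> minv f \<in> PSL2R"
  by (elim PSL2R_E) (auto simp: PSL2R_def mob_mat_adj[symmetric] intro!: sl2_mat_adj)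

lemma PSL2R_apply_minv: "f \<in> PSL2R \<Longrightarrow> z \<in> uhp \<Longrightarrow> f (minv f z) = z"
  by (elim PSL2R_E) (simp add: mob_mat_adj[symmetric] mob_mat_adj_apply)

lemma PSL2R_minv_apply: "f \<in> PSL2R \<Longrightarrow> z \<in> uhp \<Longrightarrow> minv f (f z) = z"
  by (elim PSL2R_E) (simp add: mob_mat_adj[symmetric] mob_mat_adj_apply)

lemma mid_PSL2R: "mid \<in> PSL2R"
proof -
  have "sl2 (1,0,0,1)" by (simp add: sl2_def)
  with mob_id show ?thesis unfolding PSL2R_def by force
qed

lemma PSL2R_eqI:
  assumes "f \<in> PSL2R" "g \<in> PSL2R" "\<And>z. z \<in> uhp \<Longrightarrow> f z = g z"
  shows "f = g"
proof
  show "f z = g z" for z by (cases "z \<in> uhp") (simp_all add: assms PSL2R_outside_uhp)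
qed

lemma PSL2R_eq_mid_iff:
  assumes "f \<in> PSL2R"
  shows "f = mid \<longleftrightarrow> (\<forall>z\<in>uhp. f z = z)"
proof
  show "\<forall>z\<in>uhp. f z = z \<Longrightarrow> f = mid" by (rule PSL2R_eqI[OF assms mid_PSL2R]) (simp add: mid_def)
qed (simp add: mid_def)

lemma mcomp_apply: "z \<in> uhp \<Longrightarrow> mcomp f g z = f (g z)"
  by (simp add: mcomp_def)

lemma conj_by_apply: "z \<in> uhp \<Longrightarrow> conj_by c f z = c (f (c z))"
  by (simp add: conj_by_def)

lemma mcomp_eq_iff:
  assumes "\<And>z. z \<notin> uhp \<Longrightarrow> h z = undefined"
  shows "mcomp f g = h \<longleftrightarrow> (\<forall>z\<in>uhp. f (g z) = h z)"
proof
  assume fg: "\<forall>z\<in>uhp. f (g z) = h z"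
  show "mcomp f g = h"
  proof
    show "mcomp f g z = h z" for z using fg assms by (cases "z \<in> uhp") (simp_all add: mcomp_def)
  qed
qed (auto simp: mcomp_def)

lemma order_two_PSL2R_iff:
  assumes "f \<in> PSL2R"
  shows "order_two f \<longleftrightarrow> (\<forall>z\<in>uhp. f (f z) = z) \<and> (\<exists>z\<in>uhp. f z \<noteq> z)"
  using assms PSL2R_eq_mid_iff[OF assms] mcomp_eq_iff[of mid f f]
  by (auto simp: order_two_def mid_def)

lemma mcomp_eq_self_imp_mid:
  assumes "\<sigma> \<in> PSL2R" "f \<in> PSL2R" "mcomp \<sigma> f = f"
  shows "\<sigma> = mid"
  unfolding PSL2R_eq_mid_iff[OF assms(1)]
proof
  fix w assume w: "w \<in> uhp"
  have "\<sigma> w = \<sigma> (f (minv f w))" using PSL2R_apply_minv[OF assms(2) w] by simp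
  also have "\<dots> = f (minv f w)"
    using fun_cong[OF assms(3), of "minv f w"] PSL2R_in_uhp[OF PSL2R_minv[OF assms(2)] w]
    by (simp add: mcomp_apply)
  also have "\<dots> = w" using PSL2R_apply_minv[OF assms(2) w] .
  finally show "\<sigma> w = w" .
qed

lemma minv_minv:
  assumes "f \<in> PSL2R"
  shows "minv (minv f) = f"
proof (rule PSL2R_eqI)
  fix z assume z: "z \<in> uhp"
  have "minv (minv f) z = minv (minv f) (minv f (f z))" using PSL2R_minv_apply[OF assms z] by simp
  also have "\<dots> = f z" using PSL2R_minv_apply[OF PSL2R_minv[OF assms] PSL2R_in_uhp[OF assms z]] .
  finally show "minv (minv f) z = f z" .
qed (use assms PSL2R_minv in auto)

lemma minv_mid: "minv mid = mid"
  using mob_mat_adj[of "(1,0,0,1)"] mob_id by (simp add: sl2_def mat_adj_def)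

section \<open>Elements of order two and their fixed points\<close>

lemma mob_fixed_iff:
  assumes "a*d - b*c = (1::real)" "z \<in> uhp"
  shows "mob (a,b,c,d) z = z \<longleftrightarrow> of_real a * z + of_real b = z * (of_real c * z + of_real d)"
  using mob_denominator_nonzero[OF assms] assms(2) by (simp add: mob_apply divide_eq_eq)

lemma fixed_point_equations:
  assumes "of_real a * z + of_real b = z * (of_real c * z + of_real d)" "Im z > 0"
  shows "a = 2 * c * Re z + d" "b = - c * (Re z ^ 2 + Im z ^ 2)"
proof -
  have "Re (of_real a * z + of_real b) = Re (z * (of_real c * z + of_real d))"
       "Im (of_real a * z + of_real b) = Im (z * (of_real c * z + of_real d))"
    using assms(1) by auto
  then have re: "a * Re z + b = c * (Re z ^ 2 - Im z ^ 2) + d * Re z"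
    and im: "a * Im z = (2 * c * Re z + d) * Im z"
    by (simp_all add: power2_eq_square algebra_simps)
  from im assms(2) show a: "a = 2 * c * Re z + d" by simp
  from re show "b = - c * (Re z ^ 2 + Im z ^ 2)"
    unfolding a by (simp add: algebra_simps power2_eq_square)
qed

lemma fixed_point_sl2:
  assumes "sl2 (a,b,c,d)" "z \<in> uhp" "mob (a,b,c,d) z = z"
  shows "a = 2 * c * Re z + d" "b = - c * (Re z ^ 2 + Im z ^ 2)"
    "(d + c * Re z)^2 + (c * Im z)^2 = 1"
proof -
  have det: "a*d - b*c = 1" using assms(1) by (simp add: sl2_def)
  have "Im z > 0" using assms(2) by (simp add: uhp_def)
  with mob_fixed_iff[OF det assms(2)] assms(3)
  show a: "a = 2 * c * Re z + d" and b: "b = - c * (Re z ^ 2 + Im z ^ 2)"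
    using fixed_point_equations by blast+
  show "(d + c * Re z)^2 + (c * Im z)^2 = 1"
    using det unfolding a b by (simp add: algebra_simps power2_eq_square)
qed

lemma mob_eq_mid_iff:
  assumes "sl2 M"
  shows "mob M = mid \<longleftrightarrow> M = (1,0,0,1) \<or> M = (-1,0,0,-1)"
proof
  assume id: "mob M = mid"
  obtain a b c d where M: "M = (a,b,c,d)" by (cases M)
  have i: "\<i> \<in> uhp" "2*\<i> \<in> uhp" by (auto simp: uhp_def)
  with id have "mob M \<i> = \<i>" "mob M (2*\<i>) = 2*\<i>" by (auto simp: mid_def)
  with i assms have "b = - c" "b = - 4 * c" "a = d" "a*d - b*c = 1"
    using fixed_point_sl2[of a b c d \<i>] fixed_point_sl2[of a b c d "2*\<i>"] by (simp_all add: M sl2_def)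
  then have "b = 0" "c = 0" "a = d" "a * a = 1" by auto
  then show "M = (1,0,0,1) \<or> M = (-1,0,0,-1)" by (auto simp: M square_eq_1_iff)
next
  show "M = (1,0,0,1) \<or> M = (-1,0,0,-1) \<Longrightarrow> mob M = mid"
    using mob_id mob_uminus[of 1 0 0 1] by auto
qed

lemma order_two_trace_zero:
  assumes "f \<in> PSL2R" "order_two f"
  obtains a b c where "sl2 (a,b,c,-a)" "f = mob (a,b,c,-a)"
proof -
  obtain a b c d where M: "sl2 (a,b,c,d)" "f = mob (a,b,c,d)"
    by (metis PSL2R_E assms(1) prod_cases4)
  have "mob (mat_mul (a,b,c,d) (a,b,c,d)) = mid"
    using assms(2) M mob_mat_mul[OF M(1) M(1)] by (simp add: order_two_def)
  then have sq: "b*(a+d) = 0" "c*(a+d) = 0" "a*a+b*c = d*d+b*c" "a*a+b*c = 1 \<or> a*a+b*c = -1"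
    using mob_eq_mid_iff[OF sl2_mat_mul[OF M(1) M(1)]] by (auto simp: mat_mul_def algebra_simps)
  have "d = -a"
  proof (rule ccontr)
    assume "d \<noteq> -a"
    with sq have "b = 0" "c = 0" "a = d" by (auto simp: square_eq_iff)
    with M(1) have "(a,b,c,d) = (1,0,0,1) \<or> (a,b,c,d) = (-1,0,0,-1)"
      by (auto simp: sl2_def square_eq_1_iff)
    with M(2) assms(2) show False by (auto simp: mob_eq_mid_iff[OF M(1)] order_two_def)
  qed
  with M that show ?thesis by blast
qed

lemma trace_zero_fixed_point:
  assumes "sl2 (a,b,c,-a)" "z \<in> uhp" "mob (a,b,c,-a) z = z"
  shows "\<bar>c\<bar> = 1 / Im z" "a = c * Re z" "b = - c * (Re z ^ 2 + Im z ^ 2)"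
proof -
  note fp = fixed_point_sl2[OF assms]
  show a: "a = c * Re z" using fp(1) by simp
  show "b = - c * (Re z ^ 2 + Im z ^ 2)" using fp(2) .
  have "(c * Im z)^2 = 1" using fp(3) a by simp
  then have "\<bar>c\<bar> * Im z = 1"
    using assms(2) by (simp add: uhp_def abs_square_eq_1 abs_mult)
  then show "\<bar>c\<bar> = 1 / Im z" using assms(2) by (simp add: uhp_def field_simps)
qed

lemma trace_zero_has_fixed_point:
  assumes "sl2 (a,b,c,-a)"
  shows "\<exists>z\<in>uhp. mob (a,b,c,-a) z = z"
proof -
  have det: "a*(-a) - b*c = 1" using assms by (simp add: sl2_def)
  have "c \<noteq> 0"
  proof
    assume "c = 0"
    with det have "- (a * a) = 1" by simp
    then show False using zero_le_square[of a] by linarith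
  qed
  define z where "z = Complex (a/c) (1/\<bar>c\<bar>)"
  have z: "z \<in> uhp" using \<open>c \<noteq> 0\<close> by (simp add: z_def uhp_def)
  have "Im z * Im z = 1 / (c * c)" by (simp add: z_def abs_mult_self_eq flip: abs_mult)
  moreover have "a * (a * c) + b * (c * c) = - c"
  proof -
    have "a * a + b * c = -1" using det by simp
    then show ?thesis by (metis mult.assoc mult.commute distrib_left mult_minus1_right)
  qed
  ultimately have "a * Re z + b = c * (Re z * Re z - Im z * Im z) - a * Re z"
    using \<open>c \<noteq> 0\<close> by (simp add: z_def field_simps)
  moreover have "a * Im z = 2 * c * Re z * Im z - a * Im z" using \<open>c \<noteq> 0\<close> by (simp add: z_def)
  ultimately have "of_real a * z + of_real b = z * (of_real c * z + of_real (-a))"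
    by (simp add: complex_eq_iff algebra_simps)
  then show ?thesis using mob_fixed_iff[OF det z] z by blast
qed

lemma order_two_unique_fixed_point:
  assumes "f \<in> PSL2R" "order_two f"
  shows "\<exists>!z. z \<in> uhp \<and> f z = z"
proof -
  obtain a b c where M: "sl2 (a,b,c,-a)" "f = mob (a,b,c,-a)"
    using order_two_trace_zero[OF assms] .
  have "z = w" if "z \<in> uhp" "f z = z" "w \<in> uhp" "f w = w" for z w
  proof -
    note fz = trace_zero_fixed_point[OF M(1) that(1) that(2)[unfolded M(2)]]
      and fw = trace_zero_fixed_point[OF M(1) that(3) that(4)[unfolded M(2)]]
    have "Im z = Im w" using fz(1) fw(1) by simp
    moreover have "c \<noteq> 0" using fz(1) that(1) by (auto simp: uhp_def)
    then have "Re z = Re w" using fz(2) fw(2) by simp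
    ultimately show "z = w" by (simp add: complex_eq_iff)
  qed
  with trace_zero_has_fixed_point[OF M(1)] M(2) show ?thesis by blast
qed

lemma order_two_common_fixed_point_eq:
  assumes "f \<in> PSL2R" "order_two f" "g \<in> PSL2R" "order_two g"
    and "z \<in> uhp" "f z = z" "g z = z"
  shows "f = g"
proof -
  obtain a b c where f: "sl2 (a,b,c,-a)" "f = mob (a,b,c,-a)"
    using order_two_trace_zero[OF assms(1,2)] .
  obtain a' b' c' where g: "sl2 (a',b',c',-a')" "g = mob (a',b',c',-a')"
    using order_two_trace_zero[OF assms(3,4)] .
  note fp = trace_zero_fixed_point[OF f(1) assms(5)] and gp = trace_zero_fixed_point[OF g(1) assms(5)]
  have "\<bar>c'\<bar> = \<bar>c\<bar>" using fp(1) gp(1) assms(6,7) f(2) g(2) by simp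
  then consider "c' = c" | "c' = - c" by linarith
  then show ?thesis
  proof cases
    case 1
    then show ?thesis using fp gp assms(6,7) f(2) g(2) by simp
  next
    case 2
    then have "(a',b',c',-a') = (-a,-b,-c,-(-a))" using fp gp assms(6,7) f(2) g(2) by simp
    then show ?thesis using f(2) g(2) mob_uminus[of a b c "-a"] by simp
  qed
qed

lemma order_two_conjugate:
  assumes \<sigma>: "\<sigma> \<in> PSL2R" "order_two \<sigma>" and "\<tau> \<in> PSL2R"
    and \<phi>: "\<And>w. w \<in> uhp \<Longrightarrow> \<phi> w \<in> uhp" and \<psi>: "\<And>w. w \<in> uhp \<Longrightarrow> \<psi> w \<in> uhp"
    and \<psi>\<phi>: "\<And>w. w \<in> uhp \<Longrightarrow> \<psi> (\<phi> w) = w" and \<phi>\<psi>: "\<And>w. w \<in> uhp \<Longrightarrow> \<phi> (\<psi> w) = w"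
    and \<tau>: "\<And>w. w \<in> uhp \<Longrightarrow> \<tau> w = \<psi> (\<sigma> (\<phi> w))"
  shows "order_two \<tau>"
  unfolding order_two_PSL2R_iff[OF \<open>\<tau> \<in> PSL2R\<close>]
proof
  have \<sigma>_uhp: "\<And>w. w \<in> uhp \<Longrightarrow> \<sigma> w \<in> uhp" using PSL2R_in_uhp[OF \<sigma>(1)] .
  obtain u where u: "u \<in> uhp" "\<sigma> u \<noteq> u" and \<sigma>\<sigma>: "\<And>w. w \<in> uhp \<Longrightarrow> \<sigma> (\<sigma> w) = w"
    using \<sigma>(2) order_two_PSL2R_iff[OF \<sigma>(1)] by blast
  show "\<forall>w\<in>uhp. \<tau> (\<tau> w) = w" by (simp add: \<tau> \<phi> \<psi> \<psi>\<phi> \<phi>\<psi> \<sigma>_uhp \<sigma>\<sigma>)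
  have "\<tau> (\<psi> u) = \<psi> (\<sigma> u)" using \<tau> \<psi> \<phi>\<psi> u(1) by simp
  moreover have "\<psi> (\<sigma> u) \<noteq> \<psi> u"
  proof
    assume "\<psi> (\<sigma> u) = \<psi> u"
    then have "\<phi> (\<psi> (\<sigma> u)) = \<phi> (\<psi> u)" by simp
    with u show False using \<phi>\<psi> \<sigma>_uhp by simp
  qed
  ultimately show "\<exists>w\<in>uhp. \<tau> w \<noteq> w" using \<psi>[OF u(1)] by (intro bexI[of _ "\<psi> u"]) auto
qed

section \<open>Finiteness of stabilisers\<close>

lemma fixing_matrices_bounded:
  assumes "z \<in> uhp"
  shows "bounded {M. sl2 M \<and> mob M z = z}"
proof -
  define x y where "x = Re z" and "y = Im z"
  have y: "y > 0" using assms by (simp add: uhp_def y_def)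
  define R where "R = 2 + (2 * \<bar>x\<bar> + 1 + x^2 + y^2) / y"
  have "norm M \<le> R" if "sl2 M" "mob M z = z" for M
  proof -
    obtain a b c d where M: "M = (a,b,c,d)" by (cases M)
    note fp = fixed_point_sl2[OF that(1)[unfolded M] assms that(2)[unfolded M], folded x_def y_def]
    have "(c*y)^2 \<le> 1" "(d + c*x)^2 \<le> 1" using fp(3) by (smt (verit) zero_le_power2)+
    then have cy: "\<bar>c\<bar> * y \<le> 1" and dcx: "\<bar>d + c*x\<bar> \<le> 1"
      using y by (simp_all add: abs_square_le_1 abs_mult)
    then have c: "\<bar>c\<bar> \<le> 1 / y" using y by (simp add: field_simps)
    have cx: "\<bar>c * x\<bar> \<le> \<bar>x\<bar> / y"
      using mult_right_mono[OF c abs_ge_zero[of x]] by (simp add: abs_mult)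
    have b: "\<bar>b\<bar> \<le> (x^2 + y^2) / y"
      using mult_right_mono[OF c, of "x^2 + y^2"] fp(2) by (simp add: abs_mult)
    have "norm M \<le> \<bar>a\<bar> + \<bar>b\<bar> + \<bar>c\<bar> + \<bar>d\<bar>"
      using norm_Pair_le[of a "(b,c,d)"] norm_Pair_le[of b "(c,d)"] norm_Pair_le[of c d]
      by (simp add: M)
    also have "\<dots> \<le> R"
      using fp(1) b c cx dcx y by (simp add: R_def add_divide_distrib) linarith
    finally show ?thesis .
  qed
  then show ?thesis unfolding bounded_iff mem_Collect_eq by blast
qed

lemma infinite_bounded_close_pair:
  fixes T :: "'a::heine_borel set"
  assumes "infinite T" "bounded T" "\<delta> > 0"
  obtains M N where "M \<in> T" "N \<in> T" "M \<noteq> N" "dist M N < \<delta>"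
proof -
  obtain L where "L islimpt T" using bounded_infinite_imp_islimpt[OF order_refl assms(2,1)] by blast
  then have "infinite (T \<inter> ball L (\<delta>/2))" using assms(3) by (simp add: islimpt_eq_infinite_ball)
  then obtain M N where "M \<in> T \<inter> ball L (\<delta>/2)" "N \<in> T \<inter> ball L (\<delta>/2)" "M \<noteq> N"
    by (metis finite_insert finite.emptyI insert_Diff ex_in_conv DiffE singletonI)
  with dist_triangle_half_r[of L M \<delta> N] that show ?thesis by auto
qed

text \<open>Two distinct nearby matrices \<open>M, N\<close> of \<open>T\<close> would give an element \<open>M\<^sup>-\<^sup>1 N \<noteq> 1\<close> of the
  group arbitrarily close to the identity, by uniform continuity of \<open>(M, N) \<mapsto> M\<^sup>-\<^sup>1 N\<close> on a
  compact set.\<close>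
lemma discrete_subgroup_bounded_finite:
  assumes \<Gamma>: "discrete_subgroup \<Gamma>" and T: "T \<subseteq> {M. sl2 M \<and> mob M \<in> \<Gamma>}" "bounded T"
  shows "finite T"
proof (rule ccontr)
  assume "infinite T"
  define S where "S = {M. sl2 M \<and> mob M \<in> \<Gamma>}"
  define q where "q = (\<lambda>(M,N). mat_mul (mat_adj M) N)"
  have "(1,0,0,1) \<in> S" using \<Gamma> mob_id by (simp add: S_def sl2_def discrete_subgroup_def)
  then have "(1,0,0,1) isolated_in S" using \<Gamma> by (simp add: S_def discrete_subgroup_def)
  then obtain e where "e > 0" and e: "\<And>N. N \<in> S \<Longrightarrow> dist (1,0,0,1) N < e \<Longrightarrow> N = (1,0,0,1)"
    unfolding isolated_in_dist_Ex_iff by blast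
  obtain B where "\<forall>M\<in>T. norm M \<le> B" using T(2) by (auto simp: bounded_iff)
  then have B: "T \<subseteq> cball 0 B" by auto
  have "uniformly_continuous_on (cball 0 B \<times> cball 0 B) q"
    unfolding q_def
    by (intro compact_uniformly_continuous continuous_on_mat_adj_mul compact_Times compact_cball)
  then obtain \<delta> where "\<delta> > 0" and \<delta>: "\<And>P P'. P \<in> cball 0 B \<times> cball 0 B \<Longrightarrow>
      P' \<in> cball 0 B \<times> cball 0 B \<Longrightarrow> dist P' P < \<delta> \<Longrightarrow> dist (q P') (q P) < e"
    unfolding uniformly_continuous_on_def using \<open>e > 0\<close> by metis
  obtain M N where MN: "M \<in> T" "N \<in> T" "M \<noteq> N" "dist M N < \<delta>"
    using infinite_bounded_close_pair[OF \<open>infinite T\<close> T(2) \<open>\<delta> > 0\<close>] .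
  have sl2: "sl2 M" "sl2 N" and \<Gamma>MN: "mob M \<in> \<Gamma>" "mob N \<in> \<Gamma>" using MN T by auto
  have "dist (M,N) (M,M) < \<delta>" using MN by (simp add: dist_Pair_Pair dist_commute)
  with MN B have "dist (q (M,N)) (q (M,M)) < e" by (intro \<delta>) auto
  moreover have "q (M,N) \<in> S"
    using \<Gamma> \<Gamma>MN sl2 mob_mat_mul[OF sl2_mat_adj[OF sl2(1)] sl2(2)] mob_mat_adj[OF sl2(1)]
    by (simp add: q_def S_def sl2_mat_mul sl2_mat_adj discrete_subgroup_def)
  ultimately have "q (M,N) = (1,0,0,1)" using e by (simp add: q_def mat_adj_mul[OF sl2(1)] dist_commute)
  have "N = mat_mul (mat_mul M (mat_adj M)) N" by (simp add: mat_mul_adj[OF sl2(1)] mat_mul_id_left)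
  also have "\<dots> = mat_mul M (q (M,N))" by (simp add: q_def mat_mul_assoc)
  also have "\<dots> = M" using \<open>q (M,N) = (1,0,0,1)\<close> by (simp add: mat_mul_id_right)
  finally show False using MN by simp
qed

lemma stab_finite:
  assumes "discrete_subgroup \<Gamma>" "z \<in> uhp"
  shows "finite (stab \<Gamma> z)"
proof -
  define T where "T = {M. sl2 M \<and> mob M \<in> \<Gamma> \<and> mob M z = z}"
  have "bounded T" by (rule bounded_subset[OF fixing_matrices_bounded[OF assms(2)]]) (auto simp: T_def)
  then have "finite T" by (intro discrete_subgroup_bounded_finite[OF assms(1)]) (auto simp: T_def)
  moreover have "stab \<Gamma> z \<subseteq> mob ` T"
    using assms(1) by (force simp: stab_def T_def discrete_subgroup_def PSL2R_def)
  ultimately show ?thesis by (rule finite_surj)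
qed

section \<open>Parity of stabilisers\<close>

lemma even_card_involution:
  assumes "finite X" "\<And>x. x \<in> X \<Longrightarrow> h x \<in> X" "\<And>x. x \<in> X \<Longrightarrow> h (h x) = x"
    "\<And>x. x \<in> X \<Longrightarrow> h x \<noteq> x"
  shows "even (card X)"
proof -
  have "(\<Sum>x\<in>X. 1 :: bit) = 0"
    by (rule sum_involution_eq_0[of X "\<lambda>_. 1" h]) (use assms in auto)
  then show ?thesis
    by (metis even_of_nat even_zero sum_constant mult.right_neutral)
qed

lemma even_inverse_closed_has_order_two:
  assumes "A \<subseteq> PSL2R" "finite A" "even (card A)" "mid \<in> A" "\<And>f. f \<in> A \<Longrightarrow> minv f \<in> A"
  shows "\<exists>f\<in>A. order_two f"
proof -
  define F where "F = {f\<in>A. minv f = f}"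
  have "even (card (A - F))"
    using assms(1,2,5) minv_minv by (intro even_card_involution[where h = minv]) (auto simp: F_def)
  moreover have "card A = card F + card (A - F)"
    using assms(2) card_Diff_subset[of F A] card_mono[of A F] by (auto simp: F_def)
  ultimately have "even (card F)" using assms(3) by simp
  moreover have "mid \<in> F" using assms(4) minv_mid by (simp add: F_def)
  ultimately have "F \<noteq> {mid}" by auto
  with \<open>mid \<in> F\<close> obtain f where f: "f \<in> A" "minv f = f" "f \<noteq> mid" by (auto simp: F_def)
  then have fP: "f \<in> PSL2R" using assms(1) by auto
  have "order_two f"
    unfolding order_two_PSL2R_iff[OF fP]
    using PSL2R_apply_minv[OF fP] f(2,3) PSL2R_eq_mid_iff[OF fP] by auto
  with f show ?thesis by auto
qed

lemma elliptic_even_has_order_two: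
  assumes "discrete_subgroup \<Gamma>" "elliptic_even \<Gamma> z"
  shows "\<exists>f\<in>stab \<Gamma> z. order_two f"
proof (rule even_inverse_closed_has_order_two)
  have "z \<in> uhp" using assms(2) by (simp add: elliptic_even_def)
  with assms(1) show "stab \<Gamma> z \<subseteq> PSL2R" "mid \<in> stab \<Gamma> z"
    by (auto simp: stab_def discrete_subgroup_def mid_def)
  show "minv f \<in> stab \<Gamma> z" if "f \<in> stab \<Gamma> z" for f
    using that assms(1) \<open>z \<in> uhp\<close> PSL2R_minv_apply[of f z]
    by (auto simp: stab_def discrete_subgroup_def)
  show "finite (stab \<Gamma> z)" "even (card (stab \<Gamma> z))"
    using assms(2) by (auto simp: elliptic_even_def)
qed

lemma order_two_fixed_point_elliptic_even:
  assumes \<Gamma>: "discrete_subgroup \<Gamma>" and \<sigma>: "\<sigma> \<in> \<Gamma>" "order_two \<sigma>" and z: "z \<in> uhp" "\<sigma> z = z"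
  shows "elliptic_even \<Gamma> z"
proof -
  have \<Gamma>P: "\<Gamma> \<subseteq> PSL2R" and \<Gamma>mul: "\<And>f g. f \<in> \<Gamma> \<Longrightarrow> g \<in> \<Gamma> \<Longrightarrow> mcomp f g \<in> \<Gamma>"
    using \<Gamma> by (auto simp: discrete_subgroup_def)
  have \<sigma>P: "\<sigma> \<in> PSL2R" using \<sigma>(1) \<Gamma>P by blast
  have \<sigma>\<sigma>: "\<And>w. w \<in> uhp \<Longrightarrow> \<sigma> (\<sigma> w) = w"
    using \<sigma>(2) unfolding order_two_PSL2R_iff[OF \<sigma>P] by blast
  have "even (card (stab \<Gamma> z))"
  proof (rule even_card_involution[where h = "mcomp \<sigma>"])
    show "finite (stab \<Gamma> z)" using stab_finite[OF \<Gamma> z(1)] .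
    fix f assume f: "f \<in> stab \<Gamma> z"
    then have fP: "f \<in> PSL2R" using \<Gamma>P by (auto simp: stab_def)
    show "mcomp \<sigma> f \<in> stab \<Gamma> z" using f \<sigma> z \<Gamma>mul by (simp add: stab_def mcomp_apply)
    show "mcomp \<sigma> (mcomp \<sigma> f) = f"
    proof
      show "mcomp \<sigma> (mcomp \<sigma> f) w = f w" for w
        by (cases "w \<in> uhp") (simp_all add: mcomp_def \<sigma>\<sigma> PSL2R_in_uhp[OF fP] PSL2R_outside_uhp[OF fP])
    qed
    show "mcomp \<sigma> f \<noteq> f"
      using mcomp_eq_self_imp_mid[OF \<sigma>P fP] \<sigma>(2) by (auto simp: order_two_def)
  qed
  with z stab_finite[OF \<Gamma> z(1)] show ?thesis by (simp add: elliptic_even_def)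
qed

section \<open>The twisted centraliser \<open>Z\<^sub>\<gamma>\<close>\<close>

lemma Zset_iff:
  assumes "\<Gamma> \<subseteq> PSL2R" "\<gamma> \<in> PSL2R"
  shows "\<sigma> \<in> Zset \<Gamma> c \<gamma> \<longleftrightarrow> \<sigma> \<in> \<Gamma> \<and> (\<forall>u\<in>uhp. c (\<sigma> (c (\<gamma> u))) = \<gamma> (\<sigma> u))"
proof (cases "\<sigma> \<in> \<Gamma>")
  case True
  then have \<sigma>: "\<sigma> \<in> PSL2R" using assms(1) by blast
  have "\<sigma> \<in> Zset \<Gamma> c \<gamma> \<longleftrightarrow> (\<forall>w\<in>uhp. c (\<sigma> (c (\<gamma> (minv \<sigma> w)))) = \<gamma> w)"
    using True PSL2R_in_uhp[OF PSL2R_minv[OF \<sigma>]] PSL2R_in_uhp[OF assms(2)]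
    by (simp add: Zset_def mcomp_eq_iff PSL2R_outside_uhp[OF assms(2)] mcomp_apply conj_by_apply)
  also have "\<dots> \<longleftrightarrow> (\<forall>u\<in>uhp. c (\<sigma> (c (\<gamma> u))) = \<gamma> (\<sigma> u))"
  proof safe
    fix u assume "\<forall>w\<in>uhp. c (\<sigma> (c (\<gamma> (minv \<sigma> w)))) = \<gamma> w" "u \<in> uhp"
    then show "c (\<sigma> (c (\<gamma> u))) = \<gamma> (\<sigma> u)"
      using PSL2R_in_uhp[OF \<sigma>] PSL2R_minv_apply[OF \<sigma>] by (metis (no_types))
  next
    fix w assume "\<forall>u\<in>uhp. c (\<sigma> (c (\<gamma> u))) = \<gamma> (\<sigma> u)" "w \<in> uhp"
    then show "c (\<sigma> (c (\<gamma> (minv \<sigma> w)))) = \<gamma> w"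
      using PSL2R_in_uhp[OF PSL2R_minv[OF \<sigma>]] PSL2R_apply_minv[OF \<sigma>] by (metis (no_types))
  qed
  finally show ?thesis using True by blast
qed (simp add: Zset_def)

lemma Zset_order_two_fixed_point_in_Cset:
  assumes c: "complex_conjugation c" and "\<gamma> \<in> PSL2R" "\<sigma> \<in> PSL2R" "order_two \<sigma>"
    and twisted: "\<forall>u\<in>uhp. c (\<sigma> (c (\<gamma> u))) = \<gamma> (\<sigma> u)"
    and z: "z \<in> uhp" "\<sigma> z = z"
  shows "z \<in> Cset c \<gamma>"
proof -
  have c_uhp: "\<And>w. w \<in> uhp \<Longrightarrow> c w \<in> uhp" and cc: "\<And>w. w \<in> uhp \<Longrightarrow> c (c w) = w"
    using c by (auto simp: complex_conjugation_def)
  define v where "v = c (\<gamma> z)"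
  have v: "v \<in> uhp" using c_uhp PSL2R_in_uhp[OF assms(2) z(1)] by (simp add: v_def)
  have "c (\<sigma> v) = c v" using twisted z cc PSL2R_in_uhp[OF assms(2) z(1)] by (simp add: v_def)
  then have "c (c (\<sigma> v)) = c (c v)" by simp
  then have "\<sigma> v = v" using cc PSL2R_in_uhp[OF assms(3) v] v by simp
  then have "v = z" using order_two_unique_fixed_point[OF assms(3,4)] v z by blast
  then have "c (c (\<gamma> z)) = c z" by (simp add: v_def)
  then show ?thesis using z cc PSL2R_in_uhp[OF assms(2) z(1)] by (simp add: Cset_def)
qed

text \<open>The conjugate \<open>\<tau> = \<gamma>\<^sup>-\<^sup>1 \<sigma>\<^sup>c \<gamma>\<close> is \<open>\<psi> \<circ> \<sigma> \<circ> \<phi>\<close> for the mutually inverse bijections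
  \<open>\<phi> = c \<circ> \<gamma>\<close> and \<open>\<psi> = \<gamma>\<^sup>-\<^sup>1 \<circ> c\<close> of the upper half-plane, and \<open>\<phi>\<close> maps \<open>z \<in> C\<^sub>\<gamma>\<close> to itself.\<close>
lemma order_two_fixing_Cset_point_in_Zset:
  assumes \<Gamma>: "discrete_subgroup \<Gamma>" and c: "complex_conjugation c" and "conj_by c ` \<Gamma> \<subseteq> \<Gamma>"
    and \<gamma>: "\<gamma> \<in> \<Gamma>" and z: "z \<in> Cset c \<gamma>" and \<sigma>: "\<sigma> \<in> \<Gamma>" "order_two \<sigma>" "\<sigma> z = z"
  shows "\<sigma> \<in> Zset \<Gamma> c \<gamma>"
proof -
  have \<Gamma>P: "\<Gamma> \<subseteq> PSL2R" and \<Gamma>mul: "\<And>f g. f \<in> \<Gamma> \<Longrightarrow> g \<in> \<Gamma> \<Longrightarrow> mcomp f g \<in> \<Gamma>"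
    and \<Gamma>inv: "\<And>f. f \<in> \<Gamma> \<Longrightarrow> minv f \<in> \<Gamma>"
    using \<Gamma> by (auto simp: discrete_subgroup_def)
  have c_uhp: "\<And>w. w \<in> uhp \<Longrightarrow> c w \<in> uhp" and cc: "\<And>w. w \<in> uhp \<Longrightarrow> c (c w) = w"
    using c by (auto simp: complex_conjugation_def)
  have \<gamma>P: "\<gamma> \<in> PSL2R" and \<sigma>P: "\<sigma> \<in> PSL2R" using \<gamma> \<sigma> \<Gamma>P by auto
  define \<phi> where "\<phi> w = c (\<gamma> w)" for w
  define \<psi> where "\<psi> w = minv \<gamma> (c w)" for w
  have \<phi>: "\<And>w. w \<in> uhp \<Longrightarrow> \<phi> w \<in> uhp" "\<And>w. w \<in> uhp \<Longrightarrow> \<psi> (\<phi> w) = w"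
    using c_uhp cc PSL2R_in_uhp[OF \<gamma>P] PSL2R_minv_apply[OF \<gamma>P] by (simp_all add: \<phi>_def \<psi>_def)
  have \<psi>: "\<And>w. w \<in> uhp \<Longrightarrow> \<psi> w \<in> uhp" "\<And>w. w \<in> uhp \<Longrightarrow> \<phi> (\<psi> w) = w"
    using c_uhp cc PSL2R_in_uhp[OF PSL2R_minv[OF \<gamma>P]] PSL2R_apply_minv[OF \<gamma>P]
    by (simp_all add: \<phi>_def \<psi>_def)
  define \<tau> where "\<tau> = mcomp (mcomp (minv \<gamma>) (conj_by c \<sigma>)) \<gamma>"
  have "conj_by c \<sigma> \<in> \<Gamma>" using assms(3) \<sigma>(1) by blast
  then have \<tau>P: "\<tau> \<in> PSL2R" unfolding \<tau>_def using \<Gamma>P \<gamma> by (blast intro: \<Gamma>mul \<Gamma>inv)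
  have \<tau>_apply: "\<tau> w = \<psi> (\<sigma> (\<phi> w))" if "w \<in> uhp" for w
    using that PSL2R_in_uhp[OF \<gamma>P]
    by (simp add: \<tau>_def \<phi>_def \<psi>_def mcomp_apply conj_by_apply)
  have \<sigma>_uhp: "\<And>w. w \<in> uhp \<Longrightarrow> \<sigma> w \<in> uhp" using PSL2R_in_uhp[OF \<sigma>P] .
  have "order_two \<tau>" using order_two_conjugate[OF \<sigma>P \<sigma>(2) \<tau>P \<phi>(1) \<psi>(1) \<phi>(2) \<psi>(2) \<tau>_apply] .
  moreover have z': "z \<in> uhp" "\<phi> z = z" using z cc by (auto simp: Cset_def \<phi>_def)
  then have "\<tau> z = z" using \<phi>(2)[OF z'(1)] \<sigma>(3) by (simp add: \<tau>_apply)
  ultimately have "\<tau> = \<sigma>" using order_two_common_fixed_point_eq[OF \<tau>P _ \<sigma>P \<sigma>(2) z'(1)] \<sigma>(3) by blast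
  have "c (\<sigma> (c (\<gamma> w))) = \<gamma> (\<sigma> w)" if "w \<in> uhp" for w
  proof -
    have "\<gamma> (\<sigma> w) = \<gamma> (\<psi> (\<sigma> (\<phi> w)))" using \<open>\<tau> = \<sigma>\<close> \<tau>_apply[OF that] by simp
    also have "\<dots> = c (\<sigma> (\<phi> w))"
      using PSL2R_apply_minv[OF \<gamma>P] c_uhp \<sigma>_uhp \<phi>(1)[OF that] by (simp add: \<psi>_def)
    finally show ?thesis by (simp add: \<phi>_def)
  qed
  then show ?thesis using Zset_iff[OF \<Gamma>P \<gamma>P] \<sigma>(1) by blast
qed

theorem lemma3p7:
  assumes "real_fuchsian \<Gamma> c" and "\<gamma> \<in> \<Gamma>" and "admissible c \<gamma>"
  shows "(\<forall>z. z \<in> Cset c \<gamma> \<and> elliptic_even \<Gamma> z \<longrightarrow>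
             (\<exists>!\<sigma>. \<sigma> \<in> Zset \<Gamma> c \<gamma> \<and> order_two \<sigma> \<and> \<sigma> z = z)) \<and>
         (\<forall>\<sigma>. \<sigma> \<in> Zset \<Gamma> c \<gamma> \<and> order_two \<sigma> \<longrightarrow>
             (\<exists>!z. z \<in> Cset c \<gamma> \<and> elliptic_even \<Gamma> z \<and> \<sigma> z = z))"
proof -
  have \<Gamma>: "discrete_subgroup \<Gamma>" and c: "complex_conjugation c" and c\<Gamma>: "conj_by c ` \<Gamma> \<subseteq> \<Gamma>"
    using assms(1) unfolding real_fuchsian_def by blast+
  have \<Gamma>P: "\<Gamma> \<subseteq> PSL2R" using \<Gamma> unfolding discrete_subgroup_def by blast
  then have \<gamma>P: "\<gamma> \<in> PSL2R" using assms(2) by blast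
  show ?thesis
  proof (intro conjI allI impI)
    fix z assume z: "z \<in> Cset c \<gamma> \<and> elliptic_even \<Gamma> z"
    obtain \<sigma> where "\<sigma> \<in> stab \<Gamma> z" "order_two \<sigma>"
      using elliptic_even_has_order_two[OF \<Gamma>] z by blast
    then have \<sigma>: "\<sigma> \<in> \<Gamma>" "order_two \<sigma>" "\<sigma> z = z" by (simp_all add: stab_def)
    have "\<sigma> \<in> Zset \<Gamma> c \<gamma>"
      using order_two_fixing_Cset_point_in_Zset[OF \<Gamma> c c\<Gamma> assms(2) _ \<sigma>] z by blast
    moreover have "\<sigma>' = \<sigma>" if "\<sigma>' \<in> Zset \<Gamma> c \<gamma>" "order_two \<sigma>'" "\<sigma>' z = z" for \<sigma>'
    proof (rule order_two_common_fixed_point_eq)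
      show "\<sigma>' \<in> PSL2R" "\<sigma> \<in> PSL2R" using that(1) \<sigma>(1) \<Gamma>P by (auto simp: Zset_def)
      show "z \<in> uhp" using z by (simp add: Cset_def)
    qed (use that \<sigma> in simp_all)
    ultimately show "\<exists>!\<sigma>. \<sigma> \<in> Zset \<Gamma> c \<gamma> \<and> order_two \<sigma> \<and> \<sigma> z = z"
      using \<sigma> by blast
  next
    fix \<sigma> assume \<sigma>: "\<sigma> \<in> Zset \<Gamma> c \<gamma> \<and> order_two \<sigma>"
    then have \<sigma>\<Gamma>: "\<sigma> \<in> \<Gamma>" and \<sigma>P: "\<sigma> \<in> PSL2R" using \<Gamma>P by (auto simp: Zset_def)
    obtain z where z: "z \<in> uhp" "\<sigma> z = z" and unique: "\<And>w. w \<in> uhp \<Longrightarrow> \<sigma> w = w \<Longrightarrow> w = z"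
      using order_two_unique_fixed_point[OF \<sigma>P] \<sigma> by blast
    have "\<forall>u\<in>uhp. c (\<sigma> (c (\<gamma> u))) = \<gamma> (\<sigma> u)" using Zset_iff[OF \<Gamma>P \<gamma>P] \<sigma> by blast
    then have "z \<in> Cset c \<gamma>"
      using Zset_order_two_fixed_point_in_Cset[OF c \<gamma>P \<sigma>P _ _ z] \<sigma> by blast
    moreover have "elliptic_even \<Gamma> z"
      using order_two_fixed_point_elliptic_even[OF \<Gamma> \<sigma>\<Gamma> _ z] \<sigma> by blast
    moreover have "w = z" if "w \<in> Cset c \<gamma>" "\<sigma> w = w" for w
      using unique that by (simp add: Cset_def)
    ultimately show "\<exists>!z. z \<in> Cset c \<gamma> \<and> elliptic_even \<Gamma> z \<and> \<sigma> z = z"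
      using z by blast
  qed
qed

end
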